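(* For every real $r\ge 0$, the sphere $S_r(\Delta_1)=\{Y\in\mathcal{GH}: d_{GH}(\Delta_1,Y)=r\}$ is path connected, i.e., any two of its elements can be joined by a continuous curve in $\mathcal{GH}$ whose image lies in $S_r(\Delta_1)$.
   Context: All metric spaces (with finite-valued metrics) are considered up to isometry. $\mathcal{GH}$ denotes the class (in the sense of von Neumann–Bernays–Gödel set theory) of representatives of isometry classes of all metric spaces. $d_{GH}$ is the Gromov–Hausdorff distance, with values in $[0,\infty]$: $d_{GH}(X,Y)$ is the infimum of $r$ such that there exist a metric space $Z$ and subsets $X',Y'\subset Z$ isometric to $X,Y$ with Hausdorff distance $d_H(X',Y')\le r$. Topology on the class: for each cardinal $n$, the subclass $\mathcal{GH}_n$ of spaces of cardinality at most $n$ is a set, endowed with the topology whose base consists of the open balls of $d_{GH}$. A map $f$ from a topological space $Z$ to $\mathcal{GH}$ is continuous if it is continuous as a map into $\mathcal{GH}_n$ for some (equivalently, every) cardinal $n$ with $f(Z)\subset\mathcal{GH}_n$. A continuous curve is a continuous map from a segment $[a,b]$. $\Delta_1$ is the single-point metric space. *)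

theory Defs
  imports "HOL-Analysis.Analysis"
begin

definition nbhd :: "'a metric \<Rightarrow> 'a set \<Rightarrow> real \<Rightarrow> 'a set" where
  "nbhd Z A r = {z \<in> mspace Z. \<exists>a\<in>A. mdist Z z a < r}"

text \<open>Hausdorff distance (extended-real valued; infinite if no r works).\<close>
definition hausdorff_dist :: "'a metric \<Rightarrow> 'a set \<Rightarrow> 'a set \<Rightarrow> ereal" where
  "hausdorff_dist Z A B =
     Inf {ereal r | r. r > 0 \<and> A \<subseteq> nbhd Z B r \<and> B \<subseteq> nbhd Z A r}"

definition isom_embedding :: "('a \<Rightarrow> 'c) \<Rightarrow> 'a metric \<Rightarrow> 'c metric \<Rightarrow> bool" where
  "isom_embedding f X Z \<longleftrightarrow> f ` mspace X \<subseteq> mspace Z \<and>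
     (\<forall>x\<in>mspace X. \<forall>y\<in>mspace X. mdist Z (f x) (f y) = mdist X x y)"

definition isometric :: "'a metric \<Rightarrow> 'b metric \<Rightarrow> bool" where
  "isometric X Y \<longleftrightarrow> (\<exists>f. bij_betw f (mspace X) (mspace Y) \<and>
     (\<forall>x\<in>mspace X. \<forall>y\<in>mspace X. mdist Y (f x) (f y) = mdist X x y))"

text \<open>Gromov--Hausdorff distance.  The ambient space Z is taken with carrier in the
  type 'a + 'b; this is no restriction, since X' \<union> Y' always fits there.\<close>
definition GH_dist :: "'a metric \<Rightarrow> 'b metric \<Rightarrow> ereal" where
  "GH_dist X Y = Inf {ereal r | r. \<exists>(Z :: ('a + 'b) metric) f g.
      isom_embedding f X Z \<and> isom_embedding g Y Z \<and>
      hausdorff_dist Z (f ` mspace X) (g ` mspace Y) \<le> ereal r}"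

definition Delta1 :: "unit metric" where
  "Delta1 = metric ({()}, \<lambda>x y. 0)"

text \<open>Open GH-balls and the topology they generate on metric spaces carried by 'c
  (i.e. on GH_n for n = |'c|).\<close>
definition GH_ball :: "'c metric \<Rightarrow> real \<Rightarrow> 'c metric set" where
  "GH_ball C e = {Y. GH_dist C Y < ereal e}"

definition GH_top :: "'c metric topology" where
  "GH_top = topology_generated_by {GH_ball C e | C e. e > 0}"

end

theory Submission
  imports Defs
begin

text \<open>
  A correspondence of distortion at most \<open>2e\<close> between nonempty spaces glues them into one
  metric space at Hausdorff distance just above \<open>e\<close>, and conversely; hence
  \<open>d_GH(\<Delta>\<^sub>1, W) = r\<close> exactly when \<open>W\<close> is nonempty of diameter \<open>2r\<close>.
  For \<open>r > 0\<close> and \<open>X\<close>, \<open>Y\<close> of diameter \<open>2r\<close> with base points \<open>x\<^sub>0\<close>, \<open>y\<^sub>0\<close>, a path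
  of metrics on \<open>X \<squnion> Y\<close> over \<open>t \<in> [0,3]\<close> first grows \<open>t\<cdot>Y\<close> next to \<open>X\<close> with cross
  distances \<open>max(|x x\<^sub>0|, t r)\<close>, then slides the cross distances from \<open>max(|x x\<^sub>0|, r)\<close>
  to \<open>max(|y y\<^sub>0|, r)\<close>, and finally shrinks \<open>X\<close> symmetrically.  At every time one factor
  is unscaled and no distance exceeds \<open>2r\<close>, so the diameter stays \<open>2r\<close>; all distances are
  \<open>2r\<close>-Lipschitz in \<open>t\<close>, so the identity correspondence shows that the path is
  \<open>r\<close>-Lipschitz for \<open>d_GH\<close>.  For \<open>r = 0\<close> both spaces are points.
\<close>

lemma mdist_self [simp]: "x \<in> mspace m \<Longrightarrow> mdist m x x = 0"
  by simp

lemma mdist_diff_le: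
  assumes "p \<in> mspace Z" "p' \<in> mspace Z" "q \<in> mspace Z" "q' \<in> mspace Z"
  shows "\<bar>mdist Z p p' - mdist Z q q'\<bar> \<le> mdist Z p q + mdist Z p' q'"
proof -
  have "mdist Z p p' \<le> mdist Z p q + mdist Z q p'" "mdist Z q p' \<le> mdist Z q q' + mdist Z q' p'"
    "mdist Z q q' \<le> mdist Z q p + mdist Z p q'" "mdist Z p q' \<le> mdist Z p p' + mdist Z p' q'"
    using assms mdist_triangle by metis+
  then show ?thesis
    using mdist_commute[of Z q p] mdist_commute[of Z q' p'] unfolding abs_le_iff by linarith
qed

lemma singleton_metric [simp]:
  "mspace (metric ({p}, \<lambda>x y. 0)) = {p}" "mdist (metric ({p}, \<lambda>x y. 0)) = (\<lambda>x y. 0)"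
proof -
  have "Metric_space {p} (\<lambda>x y. 0 :: real)" by unfold_locales auto
  then show "mspace (metric ({p}, \<lambda>x y. 0)) = {p}" "mdist (metric ({p}, \<lambda>x y. 0)) = (\<lambda>x y. 0)"
    by (simp_all add: Metric_space.mspace_metric Metric_space.mdist_metric)
qed

lemma isometric_singletons: "mspace X = {x} \<Longrightarrow> mspace Y = {y} \<Longrightarrow> isometric X Y"
  unfolding isometric_def by (intro exI[of _ "\<lambda>_. y"]) (simp add: bij_betw_def)


section \<open>Correspondences\<close>

definition correspondence :: "'p metric \<Rightarrow> 'q metric \<Rightarrow> ('p \<times> 'q) set \<Rightarrow> real \<Rightarrow> bool" where
  "correspondence A B R e \<longleftrightarrow> R \<subseteq> mspace A \<times> mspace B \<and>
     (\<forall>a\<in>mspace A. \<exists>b. (a, b) \<in> R) \<and> (\<forall>b\<in>mspace B. \<exists>a. (a, b) \<in> R) \<and>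
     (\<forall>a b a' b'. (a, b) \<in> R \<longrightarrow> (a', b') \<in> R \<longrightarrow> \<bar>mdist A a a' - mdist B b b'\<bar> \<le> e)"

lemma correspondenceI:
  assumes "R \<subseteq> mspace A \<times> mspace B"
    and "\<And>a. a \<in> mspace A \<Longrightarrow> \<exists>b. (a, b) \<in> R" and "\<And>b. b \<in> mspace B \<Longrightarrow> \<exists>a. (a, b) \<in> R"
    and "\<And>a b a' b'. (a, b) \<in> R \<Longrightarrow> (a', b') \<in> R \<Longrightarrow> \<bar>mdist A a a' - mdist B b b'\<bar> \<le> e"
  shows "correspondence A B R e"
  using assms unfolding correspondence_def by blast

lemma correspondenceD:
  assumes "correspondence A B R e"
  shows "R \<subseteq> mspace A \<times> mspace B"
    and "a \<in> mspace A \<Longrightarrow> \<exists>b. (a, b) \<in> R" and "b \<in> mspace B \<Longrightarrow> \<exists>a. (a, b) \<in> R"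
    and "(a, b) \<in> R \<Longrightarrow> (a', b') \<in> R \<Longrightarrow> \<bar>mdist A a a' - mdist B b b'\<bar> \<le> e"
  using assms unfolding correspondence_def by blast+

lemma correspondence_distortion_nonneg:
  assumes "correspondence A B R e" "mspace A \<noteq> {}"
  shows "0 \<le> e"
proof -
  obtain a b where "(a, b) \<in> R" "a \<in> mspace A" "b \<in> mspace B"
    using correspondenceD(1,2)[OF assms(1)] assms(2) by blast
  with correspondenceD(4)[OF assms(1), of a b a b] show ?thesis by simp
qed

lemma correspondence_Id_on: "0 \<le> e \<Longrightarrow> correspondence A A (Id_on (mspace A)) e"
  by (rule correspondenceI) auto

lemma correspondence_relcomp:
  assumes R: "correspondence A B R e" and S: "correspondence B C S f"
  shows "correspondence A C (R O S) (e + f)"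
proof (rule correspondenceI)
  show "R O S \<subseteq> mspace A \<times> mspace C"
    using correspondenceD(1)[OF R] correspondenceD(1)[OF S] by blast
next
  fix a assume "a \<in> mspace A"
  then obtain b where "(a, b) \<in> R" using correspondenceD(2)[OF R] by blast
  moreover from this obtain c where "(b, c) \<in> S"
    using correspondenceD(1)[OF R] correspondenceD(2)[OF S] by blast
  ultimately show "\<exists>c. (a, c) \<in> R O S" by blast
next
  fix c assume "c \<in> mspace C"
  then obtain b where "(b, c) \<in> S" using correspondenceD(3)[OF S] by blast
  moreover from this obtain a where "(a, b) \<in> R"
    using correspondenceD(1)[OF S] correspondenceD(3)[OF R] by blast
  ultimately show "\<exists>a. (a, c) \<in> R O S" by blast
next
  fix a c a' c' assume "(a, c) \<in> R O S" "(a', c') \<in> R O S"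
  then obtain b b' where "(a, b) \<in> R" "(b, c) \<in> S" "(a', b') \<in> R" "(b', c') \<in> S" by auto
  then have "\<bar>mdist A a a' - mdist B b b'\<bar> \<le> e" "\<bar>mdist B b b' - mdist C c c'\<bar> \<le> f"
    using correspondenceD(4)[OF R] correspondenceD(4)[OF S] by blast+
  then show "\<bar>mdist A a a' - mdist C c c'\<bar> \<le> e + f" by linarith
qed

text \<open>
  The glued space for a correspondence \<open>R\<close> of distortion \<open>2e\<close> and a height \<open>h > e\<close>: the cross
  distance is \<open>h\<close> plus the cheapest detour through a pair of \<open>R\<close>.
\<close>

locale correspondence_gluing =
  fixes A :: "'p metric" and B :: "'q metric" and R :: "('p \<times> 'q) set" and e h :: real
  assumes corr: "correspondence A B R (2 * e)" and nonempty: "mspace A \<noteq> {}" and height: "e < h"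
begin

definition cross :: "'p \<Rightarrow> 'q \<Rightarrow> real" where
  "cross a b = h + Inf ((\<lambda>(a', b'). mdist A a a' + mdist B b' b) ` R)"

lemma R_subset: "(a, b) \<in> R \<Longrightarrow> a \<in> mspace A \<and> b \<in> mspace B"
  using correspondenceD(1)[OF corr] by blast

lemma distortion_A: "(a, b) \<in> R \<Longrightarrow> (a', b') \<in> R \<Longrightarrow> mdist A a a' \<le> mdist B b b' + 2 * e"
  using correspondenceD(4)[OF corr, of a b a' b'] unfolding abs_le_iff by linarith

lemma distortion_B: "(a, b) \<in> R \<Longrightarrow> (a', b') \<in> R \<Longrightarrow> mdist B b b' \<le> mdist A a a' + 2 * e"
  using correspondenceD(4)[OF corr, of a b a' b'] unfolding abs_le_iff by linarith

lemma e_nonneg: "0 \<le> e"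
  using correspondence_distortion_nonneg[OF corr nonempty] by simp

lemma h_pos: "0 < h"
  using e_nonneg height by simp

lemma cross_le: "(a', b') \<in> R \<Longrightarrow> cross a b \<le> h + mdist A a a' + mdist B b' b"
  unfolding cross_def by (auto intro!: cInf_lower bdd_belowI[of _ 0])

lemma cross_ge:
  assumes "\<And>a' b'. (a', b') \<in> R \<Longrightarrow> c \<le> h + mdist A a a' + mdist B b' b"
  shows "c \<le> cross a b"
proof -
  have "R \<noteq> {}" using correspondenceD(2)[OF corr] nonempty by blast
  then have "c - h \<le> Inf ((\<lambda>(a', b'). mdist A a a' + mdist B b' b) ` R)"
    using assms by (intro cInf_greatest) fastforce+
  then show ?thesis unfolding cross_def by simp
qed

lemma height_le_cross: "h \<le> cross a b"
  by (rule cross_ge) (simp add: add_nonneg_nonneg)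

lemma cross_triangle_A:
  assumes "a \<in> mspace A" "a1 \<in> mspace A"
  shows "cross a b \<le> mdist A a a1 + cross a1 b"
proof -
  have "cross a b - mdist A a a1 \<le> cross a1 b"
  proof (rule cross_ge)
    fix a' b' assume p: "(a', b') \<in> R"
    have "mdist A a a' \<le> mdist A a a1 + mdist A a1 a'" using assms R_subset[OF p] mdist_triangle by metis
    then show "cross a b - mdist A a a1 \<le> h + mdist A a1 a' + mdist B b' b"
      using cross_le[OF p, of a b] by linarith
  qed
  then show ?thesis by linarith
qed

lemma cross_triangle_B:
  assumes "b \<in> mspace B" "b1 \<in> mspace B"
  shows "cross a b \<le> cross a b1 + mdist B b1 b"
proof -
  have "cross a b - mdist B b1 b \<le> cross a b1"
  proof (rule cross_ge)
    fix a' b' assume p: "(a', b') \<in> R"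
    have "mdist B b' b \<le> mdist B b' b1 + mdist B b1 b" using assms R_subset[OF p] mdist_triangle by metis
    then show "cross a b - mdist B b1 b \<le> h + mdist A a a' + mdist B b' b1"
      using cross_le[OF p, of a b] by linarith
  qed
  then show ?thesis by linarith
qed

lemma mdist_A_le_cross:
  assumes "a \<in> mspace A" "a2 \<in> mspace A" "b \<in> mspace B"
  shows "mdist A a a2 \<le> cross a b + cross a2 b"
proof -
  have "mdist A a a2 - cross a2 b \<le> cross a b"
  proof (rule cross_ge)
    fix a' b' assume p: "(a', b') \<in> R"
    have "mdist A a a2 - h - mdist A a a' - mdist B b' b \<le> cross a2 b"
    proof (rule cross_ge)
      fix a'' b'' assume q: "(a'', b'') \<in> R"
      have "mdist A a a2 \<le> mdist A a a' + mdist A a' a2" "mdist A a' a2 \<le> mdist A a' a'' + mdist A a'' a2"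
        "mdist B b' b'' \<le> mdist B b' b + mdist B b b''"
        using assms R_subset[OF p] R_subset[OF q] mdist_triangle by metis+
      then show "mdist A a a2 - h - mdist A a a' - mdist B b' b \<le> h + mdist A a2 a'' + mdist B b'' b"
        using distortion_A[OF p q] height mdist_commute[of A a'' a2] mdist_commute[of B b b''] by linarith
    qed
    then show "mdist A a a2 - cross a2 b \<le> h + mdist A a a' + mdist B b' b" by linarith
  qed
  then show ?thesis by linarith
qed

lemma mdist_B_le_cross:
  assumes "a \<in> mspace A" "b \<in> mspace B" "b2 \<in> mspace B"
  shows "mdist B b b2 \<le> cross a b + cross a b2"
proof -
  have "mdist B b b2 - cross a b2 \<le> cross a b"
  proof (rule cross_ge)
    fix a' b' assume p: "(a', b') \<in> R"
    have "mdist B b b2 - h - mdist A a a' - mdist B b' b \<le> cross a b2"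
    proof (rule cross_ge)
      fix a'' b'' assume q: "(a'', b'') \<in> R"
      have "mdist B b b2 \<le> mdist B b b' + mdist B b' b2" "mdist B b' b2 \<le> mdist B b' b'' + mdist B b'' b2"
        "mdist A a' a'' \<le> mdist A a' a + mdist A a a''"
        using assms R_subset[OF p] R_subset[OF q] mdist_triangle by metis+
      then show "mdist B b b2 - h - mdist A a a' - mdist B b' b \<le> h + mdist A a a'' + mdist B b'' b2"
        using distortion_B[OF p q] height mdist_commute[of B b b'] mdist_commute[of A a' a] by linarith
    qed
    then show "mdist B b b2 - cross a b2 \<le> h + mdist A a a' + mdist B b' b" by linarith
  qed
  then show ?thesis by linarith
qed

definition glued_dist :: "'p + 'q \<Rightarrow> 'p + 'q \<Rightarrow> real" where
  "glued_dist u v = (case u of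
      Inl a \<Rightarrow> (case v of Inl a' \<Rightarrow> mdist A a a' | Inr b \<Rightarrow> cross a b)
    | Inr b \<Rightarrow> (case v of Inl a \<Rightarrow> cross a b | Inr b' \<Rightarrow> mdist B b b'))"

lemma glued_dist_simps [simp]:
  "glued_dist (Inl a) (Inl a') = mdist A a a'" "glued_dist (Inr b) (Inr b') = mdist B b b'"
  "glued_dist (Inl a) (Inr b) = cross a b" "glued_dist (Inr b) (Inl a) = cross a b"
  by (simp_all add: glued_dist_def)

lemma Metric_space_glued: "Metric_space (Inl ` mspace A \<union> Inr ` mspace B) glued_dist"
proof
  fix x y
  show "0 \<le> glued_dist x y"
    using height_le_cross h_pos by (cases x; cases y) (auto intro: order_trans[of 0 h])
  show "glued_dist x y = glued_dist y x" by (cases x; cases y) (auto simp: mdist_commute)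
next
  fix x y assume "x \<in> Inl ` mspace A \<union> Inr ` mspace B" "y \<in> Inl ` mspace A \<union> Inr ` mspace B"
  then show "glued_dist x y = 0 \<longleftrightarrow> x = y"
    using height_le_cross h_pos by (cases x; cases y) (auto, (metis less_le_not_le order_le_less_trans)+)
next
  fix x y z assume "x \<in> Inl ` mspace A \<union> Inr ` mspace B" "y \<in> Inl ` mspace A \<union> Inr ` mspace B"
    "z \<in> Inl ` mspace A \<union> Inr ` mspace B"
  then show "glued_dist x z \<le> glued_dist x y + glued_dist y z"
  proof (elim UnE imageE)
    fix a a1 a2 assume "x = Inl a" "y = Inl a1" "z = Inl a2" "a \<in> mspace A" "a1 \<in> mspace A" "a2 \<in> mspace A"
    then show ?thesis by (simp add: mdist_triangle)
  next
    fix a a1 b assume "x = Inl a" "y = Inl a1" "z = Inr b" "a \<in> mspace A" "a1 \<in> mspace A"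
    then show ?thesis using cross_triangle_A by simp
  next
    fix a b a2 assume "x = Inl a" "y = Inr b" "z = Inl a2" "a \<in> mspace A" "b \<in> mspace B" "a2 \<in> mspace A"
    then show ?thesis using mdist_A_le_cross by simp
  next
    fix a b b2 assume "x = Inl a" "y = Inr b" "z = Inr b2" "b \<in> mspace B" "b2 \<in> mspace B"
    then show ?thesis using cross_triangle_B[of b2 b a] by (simp add: mdist_commute)
  next
    fix b a1 a2 assume "x = Inr b" "y = Inl a1" "z = Inl a2" "a1 \<in> mspace A" "a2 \<in> mspace A"
    then show ?thesis using cross_triangle_A[of a2 a1 b] by (simp add: mdist_commute)
  next
    fix b a b2 assume "x = Inr b" "y = Inl a" "z = Inr b2" "b \<in> mspace B" "a \<in> mspace A" "b2 \<in> mspace B"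
    then show ?thesis using mdist_B_le_cross by simp
  next
    fix b b1 a assume "x = Inr b" "y = Inr b1" "z = Inl a" "b \<in> mspace B" "b1 \<in> mspace B"
    then show ?thesis using cross_triangle_B[of b b1 a] by (simp add: mdist_commute)
  next
    fix b b1 b2 assume "x = Inr b" "y = Inr b1" "z = Inr b2" "b \<in> mspace B" "b1 \<in> mspace B" "b2 \<in> mspace B"
    then show ?thesis by (simp add: mdist_triangle)
  qed
qed

definition glued :: "('p + 'q) metric" where
  "glued = metric (Inl ` mspace A \<union> Inr ` mspace B, glued_dist)"

lemma glued_simps: "mspace glued = Inl ` mspace A \<union> Inr ` mspace B" "mdist glued = glued_dist"
  unfolding glued_def
  using Metric_space.mspace_metric[OF Metric_space_glued] Metric_space.mdist_metric[OF Metric_space_glued]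
  by auto

lemma hausdorff_dist_glued_le: "hausdorff_dist glued (Inl ` mspace A) (Inr ` mspace B) \<le> ereal h"
proof -
  have paired: "glued_dist (Inl a) (Inr b) < s" "glued_dist (Inr b) (Inl a) < s"
    if "(a, b) \<in> R" "h < s" for a b s
  proof -
    have "a \<in> mspace A" "b \<in> mspace B" using R_subset[OF that(1)] by auto
    then have "cross a b \<le> h" using cross_le[OF that(1), of a b] by simp
    with that(2) show "glued_dist (Inl a) (Inr b) < s" "glued_dist (Inr b) (Inl a) < s" by simp_all
  qed
  have nbhd_A: "Inl ` mspace A \<subseteq> nbhd glued (Inr ` mspace B) s" if "h < s" for s
  proof
    fix u :: "'p + 'q" assume "u \<in> Inl ` mspace A"
    then obtain a b where "u = Inl a" "(a, b) \<in> R"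
      using correspondenceD(2)[OF corr] by blast
    then show "u \<in> nbhd glued (Inr ` mspace B) s"
      using paired(1)[OF _ that] R_subset unfolding nbhd_def glued_simps by blast
  qed
  have nbhd_B: "Inr ` mspace B \<subseteq> nbhd glued (Inl ` mspace A) s" if "h < s" for s
  proof
    fix u :: "'p + 'q" assume "u \<in> Inr ` mspace B"
    then obtain a b where "u = Inr b" "(a, b) \<in> R"
      using correspondenceD(3)[OF corr] by blast
    then show "u \<in> nbhd glued (Inl ` mspace A) s"
      using paired(2)[OF _ that] R_subset unfolding nbhd_def glued_simps by blast
  qed
  have hausdorff_le: "hausdorff_dist glued (Inl ` mspace A) (Inr ` mspace B) \<le> ereal (h + d)"
    if "0 < d" for d
  proof -
    have "0 < h + d" "h < h + d" using that h_pos by auto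
    with nbhd_A nbhd_B have "ereal (h + d) \<in> {ereal r |r. r > 0 \<and>
        Inl ` mspace A \<subseteq> nbhd glued (Inr ` mspace B) r \<and> Inr ` mspace B \<subseteq> nbhd glued (Inl ` mspace A) r}"
      by blast
    then show ?thesis unfolding hausdorff_dist_def by (rule Inf_lower)
  qed
  show ?thesis by (rule ereal_le_epsilon2) (simp add: hausdorff_le)
qed

lemma GH_dist_le_height: "GH_dist A B \<le> ereal h"
proof -
  have "isom_embedding Inl A glued" "isom_embedding Inr B glued"
    unfolding isom_embedding_def glued_simps by auto
  with hausdorff_dist_glued_le have "ereal h \<in> {ereal r |r. \<exists>(Z :: ('p + 'q) metric) f g.
      isom_embedding f A Z \<and> isom_embedding g B Z \<and>
      hausdorff_dist Z (f ` mspace A) (g ` mspace B) \<le> ereal r}"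
    by blast
  then show ?thesis unfolding GH_dist_def by (rule Inf_lower)
qed

end

lemma correspondence_imp_GH_dist_le:
  assumes "correspondence A B R (2 * e)" "mspace A \<noteq> {}"
  shows "GH_dist A B \<le> ereal e"
proof (rule ereal_le_epsilon2)
  fix d :: real assume "0 < d"
  then interpret correspondence_gluing A B R e "e + d" using assms by unfold_locales auto
  show "GH_dist A B \<le> ereal e + ereal d" using GH_dist_le_height by simp
qed

lemma GH_dist_less_imp_correspondence:
  fixes A :: "'a metric" and B :: "'b metric"
  assumes "GH_dist A B < ereal e"
  obtains R s where "s < e" "correspondence A B R (2 * s)"
proof -
  from assms obtain x where "x \<in> {ereal r | r. \<exists>(Z :: ('a + 'b) metric) f g.
      isom_embedding f A Z \<and> isom_embedding g B Z \<and>
      hausdorff_dist Z (f ` mspace A) (g ` mspace B) \<le> ereal r}" "x < ereal e"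
    unfolding GH_dist_def Inf_less_iff by blast
  then obtain r and Z :: "('a + 'b) metric" and f g where
    r: "r < e" and f: "isom_embedding f A Z" and g: "isom_embedding g B Z"
    and hausdorff_le: "hausdorff_dist Z (f ` mspace A) (g ` mspace B) \<le> ereal r"
    by auto
  have "hausdorff_dist Z (f ` mspace A) (g ` mspace B) < ereal e"
    by (rule order_le_less_trans[OF hausdorff_le]) (simp add: r)
  then obtain s where s: "s < e" "f ` mspace A \<subseteq> nbhd Z (g ` mspace B) s"
      "g ` mspace B \<subseteq> nbhd Z (f ` mspace A) s"
    unfolding hausdorff_dist_def Inf_less_iff by auto
  define R where "R = {(a, b). a \<in> mspace A \<and> b \<in> mspace B \<and> mdist Z (f a) (g b) < s}"
  have distortion: "\<bar>mdist A a a' - mdist B b b'\<bar> \<le> 2 * s" if "(a, b) \<in> R" "(a', b') \<in> R"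
    for a b a' b'
  proof -
    from that have points: "a \<in> mspace A" "a' \<in> mspace A" "b \<in> mspace B" "b' \<in> mspace B"
      and near: "mdist Z (f a) (g b) < s" "mdist Z (f a') (g b') < s"
      unfolding R_def by auto
    have "\<bar>mdist Z (f a) (f a') - mdist Z (g b) (g b')\<bar> \<le> mdist Z (f a) (g b) + mdist Z (f a') (g b')"
      using points f g unfolding isom_embedding_def by (intro mdist_diff_le) auto
    moreover have "mdist Z (f a) (f a') = mdist A a a'" "mdist Z (g b) (g b') = mdist B b b'"
      using points f g unfolding isom_embedding_def by auto
    ultimately show ?thesis using near by linarith
  qed
  have left_total: "\<exists>b. (a, b) \<in> R" if "a \<in> mspace A" for a
    using that s(2) unfolding nbhd_def R_def by blast
  have right_total: "\<exists>a. (a, b) \<in> R" if "b \<in> mspace B" for b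
  proof -
    have "g b \<in> nbhd Z (f ` mspace A) s" using that s(3) by blast
    then obtain a where "a \<in> mspace A" "mdist Z (g b) (f a) < s" unfolding nbhd_def by blast
    with that show ?thesis by (intro exI[of _ a]) (simp add: R_def mdist_commute)
  qed
  have "R \<subseteq> mspace A \<times> mspace B" unfolding R_def by auto
  then have "correspondence A B R (2 * s)"
    using left_total right_total distortion by (rule correspondenceI)
  with s(1) show ?thesis by (rule that)
qed

lemma GH_dist_le_relcomp:
  assumes "correspondence C A R (2 * s)" "correspondence A B S (2 * d)" "mspace C \<noteq> {}"
  shows "GH_dist C B \<le> ereal (s + d)"
proof (rule correspondence_imp_GH_dist_le)
  show "correspondence C B (R O S) (2 * (s + d))"
    using correspondence_relcomp[OF assms(1,2)] by (simp add: distrib_left)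
qed (rule assms(3))


section \<open>The Gromov--Hausdorff sphere around the one-point space\<close>

definition has_diameter :: "'a metric \<Rightarrow> real \<Rightarrow> bool" where
  "has_diameter W c \<longleftrightarrow> mspace W \<noteq> {} \<and> (\<forall>p\<in>mspace W. \<forall>q\<in>mspace W. mdist W p q \<le> c) \<and>
     (\<forall>c' < c. \<exists>p\<in>mspace W. \<exists>q\<in>mspace W. c' < mdist W p q)"

lemma has_diameter_0_iff: "has_diameter W 0 \<longleftrightarrow> (\<exists>p. mspace W = {p})"
proof
  assume "has_diameter W 0"
  then obtain p where p: "p \<in> mspace W" and zero: "\<forall>q\<in>mspace W. mdist W q p \<le> 0"
    unfolding has_diameter_def by blast
  have "q = p" if "q \<in> mspace W" for q
  proof -
    have "mdist W q p = 0" using zero that mdist_nonneg[of W q p] by (meson antisym)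
    then show ?thesis using mdist_zero[OF that p] by simp
  qed
  with p show "\<exists>p. mspace W = {p}" by blast
qed (auto simp: has_diameter_def)

lemma Delta1_simps [simp]: "mspace Delta1 = {()}" "mdist Delta1 = (\<lambda>x y. 0)"
  unfolding Delta1_def by simp_all

lemma GH_dist_Delta1_le:
  assumes "mspace W \<noteq> {}" "\<And>p q. p \<in> mspace W \<Longrightarrow> q \<in> mspace W \<Longrightarrow> mdist W p q \<le> 2 * \<rho>"
  shows "GH_dist Delta1 W \<le> ereal \<rho>"
proof (rule correspondence_imp_GH_dist_le)
  show "correspondence Delta1 W ({()} \<times> mspace W) (2 * \<rho>)"
    using assms by (intro correspondenceI) auto
qed simp

lemma GH_dist_Delta1_less:
  assumes "GH_dist Delta1 W < ereal e"
  obtains s where "s < e" "mspace W \<noteq> {}"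
    "\<And>p q. p \<in> mspace W \<Longrightarrow> q \<in> mspace W \<Longrightarrow> mdist W p q \<le> 2 * s"
proof -
  obtain R s where "s < e" and R: "correspondence Delta1 W R (2 * s)"
    using GH_dist_less_imp_correspondence[OF assms] by blast
  then obtain b where "((), b) \<in> R" "b \<in> mspace W"
    using correspondenceD(1,2)[OF R] by auto
  moreover have "mdist W p q \<le> 2 * s" if "p \<in> mspace W" "q \<in> mspace W" for p q
  proof -
    from that obtain u v where "(u, p) \<in> R" "(v, q) \<in> R"
      using correspondenceD(3)[OF R] by meson
    then have "\<bar>mdist Delta1 u v - mdist W p q\<bar> \<le> 2 * s"
      by (rule correspondenceD(4)[OF R])
    then show ?thesis by simp
  qed
  ultimately show ?thesis using \<open>s < e\<close> that by blast
qed

lemma GH_dist_Delta1_eq_iff: "GH_dist Delta1 W = ereal r \<longleftrightarrow> has_diameter W (2 * r)"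
proof
  assume GH: "GH_dist Delta1 W = ereal r"
  have "GH_dist Delta1 W < ereal (r + 1)" using GH by simp
  then have "mspace W \<noteq> {}" by (elim GH_dist_Delta1_less)
  moreover have "mdist W p q \<le> 2 * r" if pq: "p \<in> mspace W" "q \<in> mspace W" for p q
  proof (rule dense_ge)
    fix c assume "2 * r < c"
    with GH have "GH_dist Delta1 W < ereal (c / 2)" by simp
    then obtain s where "s < c / 2" "\<And>p q. p \<in> mspace W \<Longrightarrow> q \<in> mspace W \<Longrightarrow> mdist W p q \<le> 2 * s"
      by (elim GH_dist_Delta1_less) blast
    from this(2)[OF pq] this(1) show "mdist W p q \<le> c" by linarith
  qed
  moreover have "\<exists>p\<in>mspace W. \<exists>q\<in>mspace W. c < mdist W p q" if "c < 2 * r" for c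
  proof (rule ccontr)
    assume "\<not> ?thesis"
    then have "GH_dist Delta1 W \<le> ereal (c / 2)"
      using \<open>mspace W \<noteq> {}\<close> by (intro GH_dist_Delta1_le) (auto simp: not_less)
    with GH that show False by simp
  qed
  ultimately show "has_diameter W (2 * r)" unfolding has_diameter_def by blast
next
  assume diam: "has_diameter W (2 * r)"
  then have "GH_dist Delta1 W \<le> ereal r"
    unfolding has_diameter_def by (intro GH_dist_Delta1_le) auto
  moreover have "\<not> GH_dist Delta1 W < ereal r"
  proof
    assume "GH_dist Delta1 W < ereal r"
    then obtain s where "s < r" "\<And>p q. p \<in> mspace W \<Longrightarrow> q \<in> mspace W \<Longrightarrow> mdist W p q \<le> 2 * s"
      by (elim GH_dist_Delta1_less) blast
    with diam show False unfolding has_diameter_def by (meson mult_less_cancel_left_pos not_le zero_less_numeral)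
  qed
  ultimately show "GH_dist Delta1 W = ereal r" by simp
qed


section \<open>Continuity into the Gromov--Hausdorff class\<close>

lemma GH_dist_self_le: "mspace A \<noteq> {} \<Longrightarrow> GH_dist A A \<le> ereal 0"
  by (rule correspondence_imp_GH_dist_le[OF correspondence_Id_on]) simp_all

lemma GH_dist_less_perturb:
  assumes "GH_dist C A < ereal e" "mspace A \<noteq> {}"
  obtains s where "s < e" "\<And>B S d. correspondence A B S (2 * d) \<Longrightarrow> GH_dist C B \<le> ereal (s + d)"
proof -
  obtain R s where "s < e" and R: "correspondence C A R (2 * s)"
    using GH_dist_less_imp_correspondence[OF assms(1)] by blast
  moreover have "mspace C \<noteq> {}"
    using correspondenceD(1,3)[OF R] assms(2) by blast
  ultimately show ?thesis using that GH_dist_le_relcomp by blast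
qed

lemma continuous_map_GH_top_lipschitz:
  fixes \<gamma> :: "real \<Rightarrow> 'c metric"
  assumes L: "0 < L" and nonempty: "\<And>t. t \<in> I \<Longrightarrow> mspace (\<gamma> t) \<noteq> {}"
    and corr: "\<And>t t'. t \<in> I \<Longrightarrow> t' \<in> I \<Longrightarrow> \<exists>R. correspondence (\<gamma> t) (\<gamma> t') R (2 * (L * \<bar>t - t'\<bar>))"
  shows "continuous_map (top_of_set I) GH_top \<gamma>"
  unfolding GH_top_def
proof (rule continuous_on_generated_topo)
  fix U :: "'c metric set" assume "U \<in> {GH_ball C e |C e. e > 0}"
  then obtain C e where U: "U = GH_ball C e" by blast
  show "openin (top_of_set I) (\<gamma> -` U \<inter> topspace (top_of_set I))"
    unfolding openin_euclidean_subtopology_iff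
  proof (intro conjI ballI)
    fix t0 assume "t0 \<in> \<gamma> -` U \<inter> topspace (top_of_set I)"
    then have t0: "t0 \<in> I" "GH_dist C (\<gamma> t0) < ereal e" using U unfolding GH_ball_def by simp_all
    then obtain s where "s < e"
      and perturb: "\<And>(B :: 'c metric) S d. correspondence (\<gamma> t0) B S (2 * d) \<Longrightarrow> GH_dist C B \<le> ereal (s + d)"
      using nonempty by (elim GH_dist_less_perturb) blast+
    show "\<exists>d>0. \<forall>t\<in>I. dist t t0 < d \<longrightarrow> t \<in> \<gamma> -` U \<inter> topspace (top_of_set I)"
    proof (intro exI conjI ballI impI)
      show "0 < (e - s) / L" using \<open>s < e\<close> L by simp
      fix t assume t: "t \<in> I" "dist t t0 < (e - s) / L"
      then have "L * \<bar>t0 - t\<bar> < L * ((e - s) / L)"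
        using L by (intro mult_strict_left_mono) (simp_all add: dist_real_def abs_minus_commute)
      then have "ereal (s + L * \<bar>t0 - t\<bar>) < ereal e" using L by simp
      moreover obtain R' where "correspondence (\<gamma> t0) (\<gamma> t) R' (2 * (L * \<bar>t0 - t\<bar>))"
        using corr[OF t0(1) t(1)] by blast
      then have "GH_dist C (\<gamma> t) \<le> ereal (s + L * \<bar>t0 - t\<bar>)" by (rule perturb)
      ultimately have "GH_dist C (\<gamma> t) < ereal e" by (rule order_le_less_trans[rotated])
      then show "t \<in> \<gamma> -` U \<inter> topspace (top_of_set I)"
        using U t(1) unfolding GH_ball_def by simp
    qed
  qed simp
next
  show "\<gamma> ` topspace (top_of_set I) \<subseteq> \<Union> {GH_ball C e |C e. e > 0}"
  proof
    fix A assume "A \<in> \<gamma> ` topspace (top_of_set I)"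
    with nonempty have "GH_dist A A < ereal 1"
      by (auto intro: order_le_less_trans[OF GH_dist_self_le])
    then have "A \<in> GH_ball A 1" unfolding GH_ball_def by simp
    moreover have "GH_ball A 1 \<in> {GH_ball C e |C e. e > 0}"
      by (intro CollectI exI[of _ A] exI[of _ 1]) simp
    ultimately show "A \<in> \<Union> {GH_ball C e |C e. e > 0}" by (rule UnionI[rotated])
  qed
qed

lemma continuous_map_GH_top_const:
  fixes I :: "real set"
  assumes "mspace A \<noteq> {}"
  shows "continuous_map (top_of_set I) GH_top (\<lambda>_. A)"
proof (rule continuous_map_GH_top_lipschitz[where L = 1])
  fix t t' :: real
  show "\<exists>R. correspondence A A R (2 * (1 * \<bar>t - t'\<bar>))"
    by (rule exI, rule correspondence_Id_on) simp
qed (use assms in simp_all)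


section \<open>A curve between two spaces of equal diameter\<close>

definition scale_X :: "real \<Rightarrow> real" where "scale_X t = min 1 (3 - t)"
definition scale_Y :: "real \<Rightarrow> real" where "scale_Y t = min 1 t"
definition cross_X :: "real \<Rightarrow> real" where "cross_X t = max 0 (min 1 (2 - t))"
definition cross_Y :: "real \<Rightarrow> real" where "cross_Y t = max 0 (min 1 (t - 1))"
definition cross_r :: "real \<Rightarrow> real" where "cross_r t = min (scale_X t) (scale_Y t)"

lemma weights:
  assumes "0 \<le> t" "t \<le> 3"
  shows "0 \<le> cross_X t" "cross_X t \<le> scale_X t" "scale_X t \<le> 1"
    "0 \<le> cross_Y t" "cross_Y t \<le> scale_Y t" "scale_Y t \<le> 1"
    "0 \<le> scale_X t" "0 \<le> scale_Y t" "0 \<le> cross_r t" "cross_r t \<le> scale_X t" "cross_r t \<le> scale_Y t"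
    "cross_X t = scale_X t \<or> cross_r t = scale_X t" "cross_Y t = scale_Y t \<or> cross_r t = scale_Y t"
    "0 < scale_X t \<and> 0 < scale_Y t \<Longrightarrow> 0 < cross_r t"
    "scale_X t \<le> 0 \<Longrightarrow> t = 3" "scale_Y t \<le> 0 \<Longrightarrow> t = 0"
    "t \<le> 2 \<Longrightarrow> scale_X t = 1" "1 \<le> t \<Longrightarrow> scale_Y t = 1"
  using assms unfolding scale_X_def scale_Y_def cross_X_def cross_Y_def cross_r_def
  by (auto simp: min_def max_def split: if_splits)

lemma weights_lipschitz:
  "\<bar>scale_X t - scale_X t'\<bar> \<le> \<bar>t - t'\<bar>" "\<bar>scale_Y t - scale_Y t'\<bar> \<le> \<bar>t - t'\<bar>"
  "\<bar>cross_X t - cross_X t'\<bar> \<le> \<bar>t - t'\<bar>" "\<bar>cross_Y t - cross_Y t'\<bar> \<le> \<bar>t - t'\<bar>"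
  "\<bar>cross_r t - cross_r t'\<bar> \<le> \<bar>t - t'\<bar>"
  unfolding scale_X_def scale_Y_def cross_X_def cross_Y_def cross_r_def
  by (auto simp: min_def max_def abs_if)

lemma abs_max3_diff_le:
  fixes a b c a' b' c' K :: real
  assumes "\<bar>a - a'\<bar> \<le> K" "\<bar>b - b'\<bar> \<le> K" "\<bar>c - c'\<bar> \<le> K"
  shows "\<bar>max a (max b c) - max a' (max b' c')\<bar> \<le> K"
  using assms by (auto simp: max_def abs_le_iff)

lemma max3_mono_first:
  fixes a b c a1 k :: real
  assumes "a \<le> k + a1" "0 \<le> k"
  shows "max a (max b c) \<le> k + max a1 (max b c)"
  using assms by (auto simp: max_def)

lemma max3_mono_second:
  fixes a b c b1 k :: real
  assumes "b \<le> k + b1" "0 \<le> k"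
  shows "max a (max b c) \<le> k + max a (max b1 c)"
  using assms by (auto simp: max_def)

lemma weighted_diff_le:
  fixes f :: "real \<Rightarrow> real"
  assumes "\<bar>f t - f t'\<bar> \<le> \<bar>t - t'\<bar>" "0 \<le> d" "d \<le> K"
  shows "\<bar>f t * d - f t' * d\<bar> \<le> K * \<bar>t - t'\<bar>"
proof -
  have "\<bar>f t * d - f t' * d\<bar> = \<bar>f t - f t'\<bar> * d"
    using assms(2) by (simp add: abs_mult left_diff_distrib[symmetric])
  also have "\<dots> \<le> \<bar>t - t'\<bar> * K" using assms by (intro mult_mono) auto
  finally show ?thesis by (simp add: mult.commute)
qed

lemma mdist_triangle_scaled:
  assumes "0 \<le> c" "x \<in> mspace M" "y \<in> mspace M" "z \<in> mspace M"
  shows "c * mdist M x z \<le> c * mdist M x y + c * mdist M y z"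
  using mult_left_mono[OF mdist_triangle[OF assms(2-4)] assms(1)] by (simp add: distrib_left)

locale sphere_curve =
  fixes X :: "'a metric" and Y :: "'b metric" and r :: real and x0 :: 'a and y0 :: 'b
  assumes r_pos: "0 < r" and x0: "x0 \<in> mspace X" and y0: "y0 \<in> mspace Y"
    and diameter_X: "has_diameter X (2 * r)" and diameter_Y: "has_diameter Y (2 * r)"
begin

lemma bound_X: "p \<in> mspace X \<Longrightarrow> q \<in> mspace X \<Longrightarrow> mdist X p q \<le> 2 * r"
  using diameter_X unfolding has_diameter_def by blast

lemma bound_Y: "p \<in> mspace Y \<Longrightarrow> q \<in> mspace Y \<Longrightarrow> mdist Y p q \<le> 2 * r"
  using diameter_Y unfolding has_diameter_def by blast

definition cross_dist :: "real \<Rightarrow> 'a \<Rightarrow> 'b \<Rightarrow> real" where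
  "cross_dist t x y = max (cross_X t * mdist X x x0) (max (cross_Y t * mdist Y y y0) (cross_r t * r))"

definition curve_dist :: "real \<Rightarrow> 'a + 'b + real \<Rightarrow> 'a + 'b + real \<Rightarrow> real" where
  "curve_dist t u v = (case u of
      Inl x \<Rightarrow> (case v of
        Inl x' \<Rightarrow> scale_X t * mdist X x x' | Inr (Inl y) \<Rightarrow> cross_dist t x y | Inr (Inr _) \<Rightarrow> 0)
    | Inr (Inl y) \<Rightarrow> (case v of
        Inl x \<Rightarrow> cross_dist t x y | Inr (Inl y') \<Rightarrow> scale_Y t * mdist Y y y' | Inr (Inr _) \<Rightarrow> 0)
    | Inr (Inr _) \<Rightarrow> 0)"

lemma curve_dist_simps [simp]:
  "curve_dist t (Inl x) (Inl x') = scale_X t * mdist X x x'"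
  "curve_dist t (Inl x) (Inr (Inl y)) = cross_dist t x y"
  "curve_dist t (Inr (Inl y)) (Inl x) = cross_dist t x y"
  "curve_dist t (Inr (Inl y)) (Inr (Inl y')) = scale_Y t * mdist Y y y'"
  by (simp_all add: curve_dist_def)

definition points :: "('a + 'b + real) set" where
  "points = Inl ` mspace X \<union> Inr ` Inl ` mspace Y"

definition carrier :: "real \<Rightarrow> ('a + 'b + real) set" where
  "carrier t =
    {Inl x | x. x \<in> mspace X \<and> 0 < scale_X t} \<union> {Inr (Inl y) | y. y \<in> mspace Y \<and> 0 < scale_Y t}"

lemma carrier_subset_points: "carrier t \<subseteq> points"
  unfolding carrier_def points_def by auto

lemma points_cases:
  assumes "u \<in> points"
  obtains x where "u = Inl x" "x \<in> mspace X" | y where "u = Inr (Inl y)" "y \<in> mspace Y"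
  using assms unfolding points_def by blast

lemma cross_X_le_cross_dist: "cross_X t * mdist X x x0 \<le> cross_dist t x y"
  and cross_Y_le_cross_dist: "cross_Y t * mdist Y y y0 \<le> cross_dist t x y"
  and cross_r_le_cross_dist: "cross_r t * r \<le> cross_dist t x y"
  unfolding cross_dist_def by simp_all

lemma cross_dist_nonneg: "0 \<le> t \<Longrightarrow> t \<le> 3 \<Longrightarrow> 0 \<le> cross_dist t x y"
  using cross_r_le_cross_dist[of t x y] weights r_pos by (meson mult_nonneg_nonneg less_imp_le order_trans)

lemma cross_dist_le:
  assumes t: "0 \<le> t" "t \<le> 3" and m: "x \<in> mspace X" "y \<in> mspace Y"
  shows "cross_dist t x y \<le> 2 * r"
proof -
  have "cross_X t * mdist X x x0 \<le> mdist X x x0" "cross_Y t * mdist Y y y0 \<le> mdist Y y y0"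
    "cross_r t * r \<le> r"
    using weights[OF t] r_pos by (simp_all add: mult_left_le_one_le)
  then show ?thesis
    unfolding cross_dist_def using bound_X[OF m(1) x0] bound_Y[OF m(2) y0] r_pos by simp
qed

lemma cross_dist_lipschitz:
  assumes m: "x \<in> mspace X" "y \<in> mspace Y"
  shows "\<bar>cross_dist t x y - cross_dist t' x y\<bar> \<le> 2 * r * \<bar>t - t'\<bar>"
proof -
  have "\<bar>cross_X t * mdist X x x0 - cross_X t' * mdist X x x0\<bar> \<le> 2 * r * \<bar>t - t'\<bar>"
    using weighted_diff_le[OF weights_lipschitz(3)[of t t']] bound_X[OF m(1) x0] by simp
  moreover have "\<bar>cross_Y t * mdist Y y y0 - cross_Y t' * mdist Y y y0\<bar> \<le> 2 * r * \<bar>t - t'\<bar>"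
    using weighted_diff_le[OF weights_lipschitz(4)[of t t']] bound_Y[OF m(2) y0] by simp
  moreover have "\<bar>cross_r t * r - cross_r t' * r\<bar> \<le> 2 * r * \<bar>t - t'\<bar>"
    using weighted_diff_le[OF weights_lipschitz(5)[of t t'], of r "2 * r"] r_pos by simp
  ultimately show ?thesis unfolding cross_dist_def by (rule abs_max3_diff_le)
qed

lemma cross_dist_triangle_X:
  assumes t: "0 \<le> t" "t \<le> 3" and m: "x \<in> mspace X" "x1 \<in> mspace X"
  shows "cross_dist t x y \<le> scale_X t * mdist X x x1 + cross_dist t x1 y"
proof -
  have "cross_X t * mdist X x x0 \<le> cross_X t * mdist X x x1 + cross_X t * mdist X x1 x0"
    using weights[OF t] m x0 by (intro mdist_triangle_scaled) auto
  moreover have "cross_X t * mdist X x x1 \<le> scale_X t * mdist X x x1"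
    using weights[OF t] by (intro mult_right_mono) auto
  ultimately show ?thesis
    unfolding cross_dist_def using weights[OF t] by (intro max3_mono_first) auto
qed

lemma cross_dist_triangle_Y:
  assumes t: "0 \<le> t" "t \<le> 3" and m: "y \<in> mspace Y" "y1 \<in> mspace Y"
  shows "cross_dist t x y \<le> scale_Y t * mdist Y y y1 + cross_dist t x y1"
proof -
  have "cross_Y t * mdist Y y y0 \<le> cross_Y t * mdist Y y y1 + cross_Y t * mdist Y y1 y0"
    using weights[OF t] m y0 by (intro mdist_triangle_scaled) auto
  moreover have "cross_Y t * mdist Y y y1 \<le> scale_Y t * mdist Y y y1"
    using weights[OF t] by (intro mult_right_mono) auto
  ultimately show ?thesis
    unfolding cross_dist_def using weights[OF t] by (intro max3_mono_second) auto
qed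

text \<open>
  A detour through \<open>Y\<close> is long enough: either \<open>X\<close> enters the cross distance at full scale,
  or the constant term \<open>cross_r t * r\<close> already equals half the scaled diameter of \<open>X\<close>.
\<close>

lemma scale_X_dist_le_cross_dist:
  assumes t: "0 \<le> t" "t \<le> 3" and m: "x \<in> mspace X" "x2 \<in> mspace X"
  shows "scale_X t * mdist X x x2 \<le> cross_dist t x y + cross_dist t x2 y"
proof (cases "cross_X t = scale_X t")
  case True
  have "cross_X t * mdist X x x2 \<le> cross_X t * mdist X x x0 + cross_X t * mdist X x0 x2"
    using weights[OF t] m x0 by (intro mdist_triangle_scaled) auto
  then have "scale_X t * mdist X x x2 \<le> cross_X t * mdist X x x0 + cross_X t * mdist X x2 x0"
    using True mdist_commute[of X x0 x2] by simp
  then show ?thesis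
    using cross_X_le_cross_dist[of t x y] cross_X_le_cross_dist[of t x2 y]
    by linarith
next
  case False
  then have cross_r: "cross_r t = scale_X t" using weights[OF t] by blast
  have "scale_X t * mdist X x x2 \<le> scale_X t * (2 * r)"
    using weights[OF t] bound_X[OF m] by (intro mult_left_mono) auto
  then show ?thesis
    using cross_r cross_r_le_cross_dist[of t x y] cross_r_le_cross_dist[of t x2 y] by simp
qed

lemma scale_Y_dist_le_cross_dist:
  assumes t: "0 \<le> t" "t \<le> 3" and m: "y \<in> mspace Y" "y2 \<in> mspace Y"
  shows "scale_Y t * mdist Y y y2 \<le> cross_dist t x y + cross_dist t x y2"
proof (cases "cross_Y t = scale_Y t")
  case True
  have "cross_Y t * mdist Y y y2 \<le> cross_Y t * mdist Y y y0 + cross_Y t * mdist Y y0 y2"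
    using weights[OF t] m y0 by (intro mdist_triangle_scaled) auto
  then have "scale_Y t * mdist Y y y2 \<le> cross_Y t * mdist Y y y0 + cross_Y t * mdist Y y2 y0"
    using True mdist_commute[of Y y0 y2] by simp
  then show ?thesis
    using cross_Y_le_cross_dist[of t y x] cross_Y_le_cross_dist[of t y2 x]
    by linarith
next
  case False
  then have cross_r: "cross_r t = scale_Y t" using weights[OF t] by blast
  have "scale_Y t * mdist Y y y2 \<le> scale_Y t * (2 * r)"
    using weights[OF t] bound_Y[OF m] by (intro mult_left_mono) auto
  then show ?thesis
    using cross_r cross_r_le_cross_dist[of t x y] cross_r_le_cross_dist[of t x y2] by simp
qed

lemma curve_dist_triangle:
  assumes t: "0 \<le> t" "t \<le> 3" and points: "u \<in> points" "v \<in> points" "w \<in> points"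
  shows "curve_dist t u w \<le> curve_dist t u v + curve_dist t v w"
proof (rule points_cases[OF points(1)]; rule points_cases[OF points(2)]; rule points_cases[OF points(3)])
  fix x x1 x2 assume "u = Inl x" "v = Inl x1" "w = Inl x2"
    and "x \<in> mspace X" "x1 \<in> mspace X" "x2 \<in> mspace X"
  then show ?thesis using weights[OF t] by (simp add: mdist_triangle_scaled)
next
  fix x x1 y assume "u = Inl x" "v = Inl x1" "w = Inr (Inl y)" "x \<in> mspace X" "x1 \<in> mspace X"
  then show ?thesis using cross_dist_triangle_X[OF t] by simp
next
  fix x y x2 assume "u = Inl x" "v = Inr (Inl y)" "w = Inl x2" "x \<in> mspace X" "x2 \<in> mspace X"
  then show ?thesis using scale_X_dist_le_cross_dist[OF t] by simp
next
  fix x y y2 assume "u = Inl x" "v = Inr (Inl y)" "w = Inr (Inl y2)" "y \<in> mspace Y" "y2 \<in> mspace Y"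
  then show ?thesis using cross_dist_triangle_Y[OF t, of y2 y x] by (simp add: mdist_commute)
next
  fix y x x2 assume "u = Inr (Inl y)" "v = Inl x" "w = Inl x2" "x \<in> mspace X" "x2 \<in> mspace X"
  then show ?thesis using cross_dist_triangle_X[OF t, of x2 x y] by (simp add: mdist_commute)
next
  fix y x y2 assume "u = Inr (Inl y)" "v = Inl x" "w = Inr (Inl y2)" "y \<in> mspace Y" "y2 \<in> mspace Y"
  then show ?thesis using scale_Y_dist_le_cross_dist[OF t] by simp
next
  fix y y1 x assume "u = Inr (Inl y)" "v = Inr (Inl y1)" "w = Inl x" "y \<in> mspace Y" "y1 \<in> mspace Y"
  then show ?thesis using cross_dist_triangle_Y[OF t] by simp
next
  fix y y1 y2 assume "u = Inr (Inl y)" "v = Inr (Inl y1)" "w = Inr (Inl y2)"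
    and "y \<in> mspace Y" "y1 \<in> mspace Y" "y2 \<in> mspace Y"
  then show ?thesis using weights[OF t] by (simp add: mdist_triangle_scaled)
qed

lemma curve_dist_nonneg: "0 \<le> t \<Longrightarrow> t \<le> 3 \<Longrightarrow> 0 \<le> curve_dist t u v"
  using weights cross_dist_nonneg unfolding curve_dist_def by (auto split: sum.split)

lemma curve_dist_commute: "curve_dist t u v = curve_dist t v u"
  unfolding curve_dist_def by (auto split: sum.split simp: mdist_commute)

lemma curve_dist_le:
  assumes t: "0 \<le> t" "t \<le> 3" and uv: "u \<in> points" "v \<in> points"
  shows "curve_dist t u v \<le> 2 * r"
proof -
  have "scale_X t * mdist X x x' \<le> 2 * r" if "x \<in> mspace X" "x' \<in> mspace X" for x x'
    using weights[OF t] bound_X[OF that] mult_left_le_one_le[of "mdist X x x'" "scale_X t"] by simp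
  moreover have "scale_Y t * mdist Y y y' \<le> 2 * r" if "y \<in> mspace Y" "y' \<in> mspace Y" for y y'
    using weights[OF t] bound_Y[OF that] mult_left_le_one_le[of "mdist Y y y'" "scale_Y t"] by simp
  ultimately show ?thesis
    using uv cross_dist_le[OF t] by (elim points_cases) simp_all
qed

lemma curve_dist_lipschitz:
  assumes uv: "u \<in> points" "v \<in> points"
  shows "\<bar>curve_dist t u v - curve_dist t' u v\<bar> \<le> 2 * r * \<bar>t - t'\<bar>"
proof -
  have "\<bar>scale_X t * mdist X x x' - scale_X t' * mdist X x x'\<bar> \<le> 2 * r * \<bar>t - t'\<bar>"
    if "x \<in> mspace X" "x' \<in> mspace X" for x x'
    using weighted_diff_le[OF weights_lipschitz(1)[of t t']] bound_X[OF that] by simp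
  moreover have "\<bar>scale_Y t * mdist Y y y' - scale_Y t' * mdist Y y y'\<bar> \<le> 2 * r * \<bar>t - t'\<bar>"
    if "y \<in> mspace Y" "y' \<in> mspace Y" for y y'
    using weighted_diff_le[OF weights_lipschitz(2)[of t t']] bound_Y[OF that] by simp
  ultimately show ?thesis
    using uv cross_dist_lipschitz by (elim points_cases) simp_all
qed

lemma Metric_space_carrier:
  assumes t: "0 \<le> t" "t \<le> 3"
  shows "Metric_space (carrier t) (curve_dist t)"
proof
  fix u v
  show "0 \<le> curve_dist t u v" using curve_dist_nonneg[OF t] .
  show "curve_dist t u v = curve_dist t v u" by (rule curve_dist_commute)
next
  fix u v assume uv: "u \<in> carrier t" "v \<in> carrier t"
  have cross_dist_pos: "0 < cross_dist t x y" if "0 < scale_X t" "0 < scale_Y t" for x y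
    using weights[OF t] that r_pos cross_r_le_cross_dist[of t x y]
    by (smt (verit) mult_pos_pos)
  show "curve_dist t u v = 0 \<longleftrightarrow> u = v"
    using uv unfolding carrier_def by auto (metis cross_dist_pos less_irrefl)+
next
  fix u v w assume "u \<in> carrier t" "v \<in> carrier t" "w \<in> carrier t"
  then show "curve_dist t u w \<le> curve_dist t u v + curve_dist t v w"
    using curve_dist_triangle[OF t] carrier_subset_points by blast
qed

definition curve :: "real \<Rightarrow> ('a + 'b + real) metric" where
  "curve t = metric (carrier t, curve_dist t)"

lemma curve_simps:
  assumes "0 \<le> t" "t \<le> 3"
  shows "mspace (curve t) = carrier t" "mdist (curve t) = curve_dist t"
  using Metric_space.mspace_metric[OF Metric_space_carrier[OF assms]]
    Metric_space.mdist_metric[OF Metric_space_carrier[OF assms]]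
  unfolding curve_def by auto

text \<open>
  The carrier loses \<open>Y\<close> at \<open>t = 0\<close> and \<open>X\<close> at \<open>t = 3\<close>; the lost points are at distance
  \<open>0\<close> from the base point of the other space, so sending them there makes \<open>points\<close> induce a
  correspondence between any two times.
\<close>

definition to_carrier :: "real \<Rightarrow> 'a + 'b + real \<Rightarrow> 'a + 'b + real" where
  "to_carrier t u = (if u \<in> carrier t then u else if 0 < scale_X t then Inl x0 else Inr (Inl y0))"

lemma to_carrier_in_carrier:
  assumes t: "0 \<le> t" "t \<le> 3"
  shows "to_carrier t u \<in> carrier t"
proof -
  have "0 < scale_X t \<or> 0 < scale_Y t" using weights[OF t] by force
  then show ?thesis unfolding to_carrier_def carrier_def using x0 y0 by auto
qed

lemma curve_dist_to_carrier_self: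
  assumes t: "0 \<le> t" "t \<le> 3" and u: "u \<in> points"
  shows "curve_dist t u (to_carrier t u) = 0"
proof (cases "u \<in> carrier t")
  case True
  then show ?thesis unfolding to_carrier_def using u by (elim points_cases) auto
next
  case False
  from u show ?thesis
  proof (cases rule: points_cases)
    case (1 x)
    with False have "\<not> 0 < scale_X t" unfolding carrier_def by auto
    with weights[OF t] have "t = 3" by auto
    with False 1 y0 show ?thesis
      by (simp add: to_carrier_def cross_dist_def cross_X_def cross_Y_def cross_r_def scale_X_def scale_Y_def)
  next
    case (2 y)
    with False have "\<not> 0 < scale_Y t" unfolding carrier_def by auto
    with weights[OF t] have "t = 0" by auto
    with False 2 x0 show ?thesis
      by (simp add: to_carrier_def cross_dist_def cross_X_def cross_Y_def cross_r_def scale_X_def scale_Y_def)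
  qed
qed

lemma curve_dist_to_carrier:
  assumes t: "0 \<le> t" "t \<le> 3" and uv: "u \<in> points" "v \<in> points"
  shows "curve_dist t (to_carrier t u) (to_carrier t v) = curve_dist t u v"
proof -
  have p: "to_carrier t u \<in> points" "to_carrier t v \<in> points"
    using to_carrier_in_carrier[OF t] carrier_subset_points by blast+
  have "curve_dist t u (to_carrier t u) = 0" "curve_dist t v (to_carrier t v) = 0"
    using curve_dist_to_carrier_self[OF t] uv by auto
  then show ?thesis
    using curve_dist_triangle[OF t p(1) uv(1) uv(2)] curve_dist_triangle[OF t uv(1) p(1) uv(2)]
      curve_dist_triangle[OF t p(1) p(2) uv(2)] curve_dist_triangle[OF t p(1) uv(2) p(2)]
      curve_dist_commute[of t u "to_carrier t u"] curve_dist_commute[of t v "to_carrier t v"]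
    by linarith
qed

lemma correspondence_curve:
  assumes t: "0 \<le> t" "t \<le> 3" and t': "0 \<le> t'" "t' \<le> 3"
  defines "R \<equiv> (\<lambda>u. (to_carrier t u, to_carrier t' u)) ` points"
  shows "correspondence (curve t) (curve t') R (2 * r * \<bar>t - t'\<bar>)"
proof (rule correspondenceI, unfold curve_simps[OF t] curve_simps[OF t'])
  show "R \<subseteq> carrier t \<times> carrier t'"
    using to_carrier_in_carrier[OF t] to_carrier_in_carrier[OF t'] unfolding R_def by auto
next
  fix a assume "a \<in> carrier t"
  then have "a \<in> points" "to_carrier t a = a" using carrier_subset_points unfolding to_carrier_def by auto
  then show "\<exists>b. (a, b) \<in> R" unfolding R_def by force
next
  fix b assume "b \<in> carrier t'"
  then have "b \<in> points" "to_carrier t' b = b" using carrier_subset_points unfolding to_carrier_def by auto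
  then show "\<exists>a. (a, b) \<in> R" unfolding R_def by force
next
  fix a b a' b' assume "(a, b) \<in> R" "(a', b') \<in> R"
  then obtain u v where uv: "u \<in> points" "v \<in> points"
    and "a = to_carrier t u" "b = to_carrier t' u" "a' = to_carrier t v" "b' = to_carrier t' v"
    unfolding R_def by auto
  then show "\<bar>curve_dist t a a' - curve_dist t' b b'\<bar> \<le> 2 * r * \<bar>t - t'\<bar>"
    using curve_dist_to_carrier[OF t uv] curve_dist_to_carrier[OF t' uv] curve_dist_lipschitz[OF uv] by simp
qed

lemma carrier_0: "carrier 0 = Inl ` mspace X"
  and carrier_3: "carrier 3 = Inr ` Inl ` mspace Y"
  unfolding carrier_def scale_X_def scale_Y_def by auto

lemma isometric_curve_0: "isometric (curve 0) X"
  unfolding isometric_def curve_simps[of 0, simplified] carrier_0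
proof (intro exI conjI ballI)
  show "bij_betw projl (Inl ` mspace X) (mspace X)"
    unfolding bij_betw_def inj_on_def by (auto simp: image_image)
next
  fix u v :: "'a + 'b + real" assume "u \<in> Inl ` mspace X" "v \<in> Inl ` mspace X"
  then show "mdist X (projl u) (projl v) = curve_dist 0 u v" by (auto simp: scale_X_def)
qed

lemma isometric_curve_3: "isometric (curve 3) Y"
  unfolding isometric_def curve_simps[of 3, simplified] carrier_3
proof (intro exI conjI ballI)
  show "bij_betw (\<lambda>u. projl (projr u)) (Inr ` Inl ` mspace Y) (mspace Y)"
    unfolding bij_betw_def inj_on_def by (auto simp: image_image)
next
  fix u v :: "'a + 'b + real" assume "u \<in> Inr ` Inl ` mspace Y" "v \<in> Inr ` Inl ` mspace Y"
  then show "mdist Y (projl (projr u)) (projl (projr v)) = curve_dist 3 u v" by (auto simp: scale_Y_def)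
qed

lemma has_diameter_curve:
  assumes t: "0 \<le> t" "t \<le> 3"
  shows "has_diameter (curve t) (2 * r)"
  unfolding has_diameter_def curve_simps[OF t]
proof (intro conjI ballI allI impI)
  show "carrier t \<noteq> {}" using to_carrier_in_carrier[OF t] by blast
  fix p q assume "p \<in> carrier t" "q \<in> carrier t"
  then show "curve_dist t p q \<le> 2 * r" using carrier_subset_points curve_dist_le[OF t] by blast
next
  fix c assume "c < 2 * r"
  show "\<exists>p\<in>carrier t. \<exists>q\<in>carrier t. c < curve_dist t p q"
  proof (cases "t \<le> 2")
    case True
    then have scale: "scale_X t = 1" using weights[OF t] by blast
    obtain p q where "p \<in> mspace X" "q \<in> mspace X" "c < mdist X p q"
      using diameter_X \<open>c < 2 * r\<close> unfolding has_diameter_def by blast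
    moreover from this scale have "Inl p \<in> carrier t" "Inl q \<in> carrier t" unfolding carrier_def by auto
    ultimately show ?thesis using scale by (intro bexI[of _ "Inl p"] bexI[of _ "Inl q"]) simp_all
  next
    case False
    then have scale: "scale_Y t = 1" using weights[OF t] by simp
    obtain p q where "p \<in> mspace Y" "q \<in> mspace Y" "c < mdist Y p q"
      using diameter_Y \<open>c < 2 * r\<close> unfolding has_diameter_def by blast
    moreover from this scale have "Inr (Inl p) \<in> carrier t" "Inr (Inl q) \<in> carrier t"
      unfolding carrier_def by auto
    ultimately show ?thesis using scale by (intro bexI[of _ "Inr (Inl p)"] bexI[of _ "Inr (Inl q)"]) simp_all
  qed
qed

lemma continuous_curve: "continuous_map (top_of_set {0..3}) GH_top curve"
proof (rule continuous_map_GH_top_lipschitz[where L = r])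
  show "0 < r" by (rule r_pos)
  fix t t' :: real assume t: "t \<in> {0..3}"
  then show "mspace (curve t) \<noteq> {}" using to_carrier_in_carrier curve_simps by fastforce
  assume "t' \<in> {0..3}"
  with t show "\<exists>R. correspondence (curve t) (curve t') R (2 * (r * \<bar>t - t'\<bar>))"
    using correspondence_curve by (auto simp: mult.assoc)
qed

lemma curve_joins:
  "\<exists>(\<gamma> :: real \<Rightarrow> ('a + 'b + real) metric) a b. a \<le> b \<and>
     continuous_map (top_of_set {a..b}) GH_top \<gamma> \<and>
     isometric (\<gamma> a) X \<and> isometric (\<gamma> b) Y \<and>
     (\<forall>t\<in>{a..b}. GH_dist Delta1 (\<gamma> t) = ereal r)"
  using continuous_curve isometric_curve_0 isometric_curve_3 has_diameter_curve
  by (intro exI[of _ curve] exI[of _ 0] exI[of _ 3]) (simp add: GH_dist_Delta1_eq_iff)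

end

lemma constant_curve_joins_singletons:
  fixes X :: "'a metric" and Y :: "'b metric"
  assumes "mspace X = {x}" "mspace Y = {y}"
  shows "\<exists>(\<gamma> :: real \<Rightarrow> 'c metric) a b. a \<le> b \<and>
     continuous_map (top_of_set {a..b}) GH_top \<gamma> \<and>
     isometric (\<gamma> a) X \<and> isometric (\<gamma> b) Y \<and>
     (\<forall>t\<in>{a..b}. GH_dist Delta1 (\<gamma> t) = ereal 0)"
proof (intro exI conjI ballI)
  let ?P = "metric ({undefined}, \<lambda>x y. 0) :: 'c metric"
  show "continuous_map (top_of_set {0..0::real}) GH_top (\<lambda>_. ?P)"
    by (rule continuous_map_GH_top_const) simp
  show "isometric ?P X" "isometric ?P Y" using assms by (simp_all add: isometric_singletons)
  show "GH_dist Delta1 ?P = ereal 0" by (simp add: GH_dist_Delta1_eq_iff has_diameter_0_iff)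
qed simp

theorem theorem1:
  fixes r :: real and X :: "'a metric" and Y :: "'b metric"
  assumes "r \<ge> 0"
    and "GH_dist Delta1 X = ereal r"
    and "GH_dist Delta1 Y = ereal r"
  shows "\<exists>(\<gamma> :: real \<Rightarrow> ('a + 'b + real) metric) a b. a \<le> b \<and>
           continuous_map (top_of_set {a..b}) GH_top \<gamma> \<and>
           isometric (\<gamma> a) X \<and> isometric (\<gamma> b) Y \<and>
           (\<forall>t\<in>{a..b}. GH_dist Delta1 (\<gamma> t) = ereal r)"
proof -
  have X: "has_diameter X (2 * r)" and Y: "has_diameter Y (2 * r)"
    using assms(2,3) by (simp_all add: GH_dist_Delta1_eq_iff)
  show ?thesis
  proof (cases "r = 0")
    case True
    with X Y obtain x y where "mspace X = {x}" "mspace Y = {y}" by (auto simp: has_diameter_0_iff)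
    with True show ?thesis by (simp add: constant_curve_joins_singletons)
  next
    case False
    from X Y obtain x0 y0 where "x0 \<in> mspace X" "y0 \<in> mspace Y" unfolding has_diameter_def by blast
    with False assms(1) X Y interpret sphere_curve X Y r x0 y0 by unfold_locales auto
    show ?thesis by (rule curve_joins)
  qed
qed

end
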